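(* Let $A\in SL_d(\mathbb Z)$ be such that no eigenvalue of $A$ is a root of unity and the characteristic polynomial of $A$ is irreducible over $\mathbb Q$. Then there exists a basis $\{v_1,\dots,v_d\}$ of $\mathbb C^d$ such that (1) each $v_i$ is an eigenvector of $A$, and (2) for every $k\in\mathbb Z^d\setminus\{0\}$, if $a_1(k),\dots,a_d(k)\in\mathbb C$ are the coefficients with $k=\sum_{i=1}^d a_i(k)v_i$, then $$\prod_{i=1}^d|a_i(k)|\ge1.$$ *)

theory Defs
  imports "Jordan_Normal_Form.Char_Poly" "HOL-Computational_Algebra.Polynomial_Factorial"
begin

definition lin_comb :: "nat \<Rightarrow> (nat \<Rightarrow> complex) \<Rightarrow> (nat \<Rightarrow> complex vec) \<Rightarrow> complex vec" where
  "lin_comb d a v = vec d (\<lambda>j. \<Sum>i<d. a i * (v i $ j))"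

definition is_basis_Cd :: "nat \<Rightarrow> (nat \<Rightarrow> complex vec) \<Rightarrow> bool" where
  "is_basis_Cd d v \<longleftrightarrow>
     (\<forall>i<d. v i \<in> carrier_vec d) \<and>
     (\<forall>a. lin_comb d a v = 0\<^sub>v d \<longrightarrow> (\<forall>i<d. a i = 0)) \<and>
     (\<forall>w \<in> carrier_vec d. \<exists>a. w = lin_comb d a v)"

end

theory Submission
  imports Defs "HOL-Computational_Algebra.Field_as_Ring"
begin

(*
  The eigenvalues l_i of A are distinct, because the characteristic polynomial is irreducible
  over Q.  Let w_i be left eigenvectors, W the matrix with rows w_i, and v_i the columns of
  W^-1; then a_i(k) = w_i . k.  With K(k) the Krylov matrix with columns k, Ak, ..., A^(d-1) k
  and V the Vandermonde matrix of the l_i, one has  W K(k) = diag(a_1(k), ..., a_d(k)) V.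
  After rescaling one w_i so that det W = det V, this gives  prod_i a_i(k) = det K(k),  an
  integer.  It is nonzero: an integer vector c with K(k) c = 0 yields a polynomial p of
  degree < d with p(l_i) a_i(k) = 0 for all i, and p(l_i) <> 0 by irreducibility, so
  W k = 0 and k = 0.
*)

definition poly_of_vec :: "'a::comm_ring_1 vec \<Rightarrow> 'a poly" where
  "poly_of_vec c = (\<Sum>j<dim_vec c. monom (c $ j) j)"

lemma poly_poly_of_vec: "poly (poly_of_vec c) z = (\<Sum>j<dim_vec c. c $ j * z ^ j)"
  by (simp add: poly_of_vec_def poly_sum poly_monom)

lemma coeff_poly_of_vec: "coeff (poly_of_vec c) n = (if n < dim_vec c then c $ n else 0)"
  by (simp add: poly_of_vec_def coeff_sum coeff_monom)

lemma degree_poly_of_vec_le: "degree (poly_of_vec c) \<le> dim_vec c - 1"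
  unfolding poly_of_vec_def
  by (rule degree_sum_le) (auto intro: order.trans[OF degree_monom_le])

lemma poly_of_vec_eq_0_iff: "poly_of_vec c = 0 \<longleftrightarrow> c = 0\<^sub>v (dim_vec c)"
  by (auto simp: poly_eq_iff vec_eq_iff coeff_poly_of_vec)

lemma map_poly_poly_of_vec:
  assumes "h 0 = 0" shows "map_poly h (poly_of_vec c) = poly_of_vec (map_vec h c)"
  by (rule poly_eqI) (simp add: coeff_map_poly assms coeff_poly_of_vec)

lemma irreducible_nonzero_at_root:
  fixes f q :: "rat poly" and z :: "'a::field_char_0"
  assumes "irreducible f" and "q \<noteq> 0" and "degree q < degree f"
    and "poly (map_poly of_rat f) z = 0"
  shows "poly (map_poly of_rat q) z \<noteq> 0"
proof
  assume qz: "poly (map_poly of_rat q) z = 0"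
  have "\<not> f dvd q" using dvd_imp_degree_le[OF _ assms(2)] assms(3) by fastforce
  hence "coprime f q"
    using assms(1) by (simp add: irreducible_imp_prime_elem_gcd prime_elem_imp_coprime)
  hence "gcd f q = 1" by (simp only: coprime_iff_gcd_eq_1)
  then obtain x y where "x * f + y * q = 1"
    using bezout_coefficients_fst_snd[of f q] by metis
  interpret of_rat_poly: map_poly_comm_ring_hom "of_rat :: rat \<Rightarrow> 'a" ..
  have "poly (map_poly of_rat (x * f + y * q)) z = (1 :: 'a)" using \<open>x * f + y * q = 1\<close> by simp
  thus False using assms(4) qz by (simp only: of_rat_poly.hom_add of_rat_poly.hom_mult poly_add poly_mult) simp
qed

lemma rsquarefree_of_irreducible:
  fixes f :: "rat poly"
  assumes "irreducible f"
  shows "rsquarefree (map_poly (of_rat :: rat \<Rightarrow> 'a::field_char_0) f)"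
proof -
  have "degree f \<noteq> 0" using assms by (auto elim!: degree_eq_zeroE simp: is_unit_const_poly_iff)
  hence "pderiv f \<noteq> 0" "degree (pderiv f) < degree f"
    by (auto simp: pderiv_eq_0_iff degree_pderiv)
  with irreducible_nonzero_at_root[OF assms] show ?thesis
    unfolding rsquarefree_roots by (metis of_rat_hom.map_poly_pderiv)
qed

lemma distinct_if_rsquarefree_linear_factors:
  fixes as :: "'a::field_char_0 list"
  assumes "rsquarefree (\<Prod>a\<leftarrow>as. [:-a, 1:])"
  shows "distinct as"
proof (rule ccontr)
  assume "\<not> distinct as"
  then obtain xs ys zs u where as: "as = xs @ [u] @ ys @ [u] @ zs"
    using not_distinct_decomp by blast
  have "prod_list (map f as) = f u * f u * prod_list (map f (xs @ ys @ zs))" for f :: "'a \<Rightarrow> 'a poly"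
    unfolding as by (simp add: ac_simps)
  from this[of "\<lambda>a. [:-a, 1:]"]
  have p: "(\<Prod>a\<leftarrow>as. [:-a, 1:]) = [:-u, 1:] * [:-u, 1:] * (\<Prod>a\<leftarrow>xs @ ys @ zs. [:-a, 1:])" .
  have "poly [:-u, 1:] u = 0" by simp
  hence "poly (\<Prod>a\<leftarrow>as. [:-a, 1:]) u = 0 \<and> poly (pderiv (\<Prod>a\<leftarrow>as. [:-a, 1:])) u = 0"
    unfolding p by (simp only: pderiv_mult poly_add poly_mult) simp
  with assms show False unfolding rsquarefree_roots by blast
qed

definition vandermonde_mat :: "nat \<Rightarrow> (nat \<Rightarrow> 'a::comm_ring_1) \<Rightarrow> 'a mat" where
  "vandermonde_mat n x = mat n n (\<lambda>(i,j). x i ^ j)"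

lemma vandermonde_mat_carrier[simp]: "vandermonde_mat n x \<in> carrier_mat n n"
  by (simp add: vandermonde_mat_def)

lemma vandermonde_mat_mult_vec:
  assumes "c \<in> carrier_vec n" and "i < n"
  shows "(vandermonde_mat n x *\<^sub>v c) $ i = poly (poly_of_vec c) (x i)"
  using assms by (simp add: vandermonde_mat_def scalar_prod_def poly_poly_of_vec lessThan_atLeast0 mult.commute)

lemma det_vandermonde_mat_nonzero:
  fixes x :: "nat \<Rightarrow> 'a::idom"
  assumes inj: "inj_on x {..<n}"
  shows "det (vandermonde_mat n x) \<noteq> 0"
proof
  assume "det (vandermonde_mat n x) = 0"
  then obtain c where c: "c \<in> carrier_vec n" "c \<noteq> 0\<^sub>v n" "vandermonde_mat n x *\<^sub>v c = 0\<^sub>v n"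
    using det_0_iff_vec_prod_zero[OF vandermonde_mat_carrier] by blast
  have p0: "poly_of_vec c \<noteq> 0" using c(1,2) by (simp add: poly_of_vec_eq_0_iff)
  have "poly (poly_of_vec c) (x i) = 0" if "i < n" for i
    using vandermonde_mat_mult_vec[OF c(1) that, of x] c(3) that by simp
  hence "x ` {..<n} \<subseteq> {z. poly (poly_of_vec c) z = 0}" by auto
  hence "card (x ` {..<n}) \<le> card {z. poly (poly_of_vec c) z = 0}"
    using poly_roots_finite[OF p0] by (intro card_mono)
  also have "\<dots> \<le> degree (poly_of_vec c)" by (rule card_poly_roots_bound[OF p0])
  also have "\<dots> < n" using degree_poly_of_vec_le[of c] c(1,2) by (cases n) auto
  finally show False using card_image[OF inj] by simp
qed

lemma det_mat_diag: "det (mat_diag n f) = (\<Prod>i<n. f i)"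
proof -
  have "det (mat_diag n f) = prod_list (diag_mat (mat_diag n f))"
    by (rule det_upper_triangular[of _ n]) (auto simp: mat_diag_def upper_triangular_def)
  also have "\<dots> = (\<Prod>i<n. f i)"
    by (simp add: prod_list_diag_prod mat_diag_def lessThan_atLeast0)
  finally show ?thesis .
qed

lemma transpose_mat_diag[simp]: "transpose_mat (mat_diag n f) = mat_diag n f"
  by (rule eq_matI) (auto simp: mat_diag_def)

lemma mat_diag_mult_vec:
  assumes "c \<in> carrier_vec n"
  shows "mat_diag n f *\<^sub>v c = vec n (\<lambda>i. f i * c $ i)"
proof (rule eq_vecI)
  fix i assume "i < dim_vec (vec n (\<lambda>i. f i * c $ i))"
  thus "(mat_diag n f *\<^sub>v c) $ i = vec n (\<lambda>i. f i * c $ i) $ i"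
    using assms by (auto simp: mat_diag_def scalar_prod_def sum.remove[of _ i])
qed (simp add: mat_diag_def)

lemma kernel_trivial_if_det_nonzero:
  fixes A :: "'a::idom mat"
  assumes "A \<in> carrier_mat n n" "det A \<noteq> 0" "v \<in> carrier_vec n" "A *\<^sub>v v = 0\<^sub>v n"
  shows "v = 0\<^sub>v n"
  using assms det_0_iff_vec_prod_zero[OF assms(1)] by blast

definition krylov_mat :: "'a::comm_ring_1 mat \<Rightarrow> 'a vec \<Rightarrow> 'a mat" where
  "krylov_mat A x = mat (dim_vec x) (dim_vec x) (\<lambda>(i,j). (A ^\<^sub>m j *\<^sub>v x) $ i)"

lemma dim_krylov_mat[simp]:
  "dim_row (krylov_mat A x) = dim_vec x" "dim_col (krylov_mat A x) = dim_vec x"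
  by (simp_all add: krylov_mat_def)

lemma krylov_mat_carrier[simp]: "x \<in> carrier_vec n \<Longrightarrow> krylov_mat A x \<in> carrier_mat n n"
  by (simp add: carrier_matI)

lemma col_krylov_mat[simp]:
  "x \<in> carrier_vec n \<Longrightarrow> A \<in> carrier_mat n n \<Longrightarrow> j < n \<Longrightarrow> col (krylov_mat A x) j = A ^\<^sub>m j *\<^sub>v x"
  by (auto simp: krylov_mat_def)

lemma (in comm_ring_hom) krylov_mat_hom:
  assumes A: "A \<in> carrier_mat n n" and x: "x \<in> carrier_vec n"
  shows "krylov_mat (map_mat hom A) (map_vec hom x) = map_mat hom (krylov_mat A x)"
proof -
  have "map_mat hom A ^\<^sub>m j *\<^sub>v map_vec hom x = map_vec hom (A ^\<^sub>m j *\<^sub>v x)" for j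
    unfolding mat_hom_pow[OF A, symmetric] by (rule mult_mat_vec_hom[symmetric, OF pow_carrier_mat[OF A] x])
  thus ?thesis using A x by (intro eq_matI) (auto simp: krylov_mat_def)
qed

lemma left_eigenvector_scalar_prod_pow:
  assumes A: "A \<in> carrier_mat n n" and w: "eigenvector (transpose_mat A) w l"
    and x: "x \<in> carrier_vec n"
  shows "w \<bullet> (A ^\<^sub>m j *\<^sub>v x) = l ^ j * (w \<bullet> x)"
  using x
proof (induction j arbitrary: x)
  case 0
  thus ?case using A by simp
next
  case (Suc j)
  have wc: "w \<in> carrier_vec n" and ev: "transpose_mat A *\<^sub>v w = l \<cdot>\<^sub>v w"
    using w A by (auto simp: eigenvector_def)
  have "A ^\<^sub>m Suc j *\<^sub>v x = A ^\<^sub>m j *\<^sub>v (A *\<^sub>v x)"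
    using A Suc.prems by (simp add: assoc_mult_mat_vec[of _ n n _ n])
  moreover have "w \<bullet> (A *\<^sub>v x) = l * (w \<bullet> x)"
    using transpose_vec_mult_scalar[OF A Suc.prems wc] ev wc Suc.prems by simp
  ultimately show ?case using Suc.IH[of "A *\<^sub>v x"] A Suc.prems by simp
qed

lemma mat_of_rows_map_carrier[simp]: "mat_of_rows d (map w [0..<d]) \<in> carrier_mat d d"
  using mat_of_rows_carrier(1)[of d "map w [0..<d]"] by simp

lemma eigenrows_mult:
  assumes A: "A \<in> carrier_mat d d"
    and w: "\<And>i. i < d \<Longrightarrow> eigenvector (transpose_mat A) (w i) (lam i)"
  shows "mat_of_rows d (map w [0..<d]) * A = mat_diag d lam * mat_of_rows d (map w [0..<d])"
proof (rule eq_matI)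
  fix i j assume "i < dim_row (mat_diag d lam * mat_of_rows d (map w [0..<d]))"
    and "j < dim_col (mat_diag d lam * mat_of_rows d (map w [0..<d]))"
  hence i: "i < d" and j: "j < d" by (auto simp: mat_diag_def)
  have wi: "w i \<in> carrier_vec d" "transpose_mat A *\<^sub>v w i = lam i \<cdot>\<^sub>v w i"
    using w[OF i] A by (auto simp: eigenvector_def)
  have "w i \<bullet> col A j = col A j \<bullet> w i" using wi(1) A j by (intro comm_scalar_prod[of _ d]) auto
  also have "\<dots> = (transpose_mat A *\<^sub>v w i) $ j" using A j by simp
  also have "\<dots> = lam i * w i $ j" using wi j by simp
  finally show "(mat_of_rows d (map w [0..<d]) * A) $$ (i, j)
      = (mat_diag d lam * mat_of_rows d (map w [0..<d])) $$ (i, j)"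
    using i j A wi(1) by (simp add: mat_diag_mult_left[of _ d d] mat_of_rows_index)
qed (use A in \<open>auto simp: mat_diag_def\<close>)

lemma eigenrows_mult_krylov_mat:
  assumes A: "A \<in> carrier_mat d d"
    and w: "\<And>i. i < d \<Longrightarrow> eigenvector (transpose_mat A) (w i) (lam i)"
    and x: "x \<in> carrier_vec d"
  shows "mat_of_rows d (map w [0..<d]) * krylov_mat A x
         = mat_diag d (\<lambda>i. w i \<bullet> x) * vandermonde_mat d lam"
proof -
  have wc: "w i \<in> carrier_vec d" if "i < d" for i using w[OF that] A by (simp add: eigenvector_def)
  show ?thesis
    using A x wc by (intro eq_matI)
      (auto simp: mat_diag_mult_left[of _ d d] vandermonde_mat_def
        left_eigenvector_scalar_prod_pow[OF A w x] mult.commute)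
qed

lemma det_eigenrows_nonzero:
  fixes A :: "'a::idom mat"
  assumes A: "A \<in> carrier_mat d d" and inj: "inj_on lam {..<d}"
    and w: "\<And>i. i < d \<Longrightarrow> eigenvector (transpose_mat A) (w i) (lam i)"
  shows "det (mat_of_rows d (map w [0..<d])) \<noteq> 0"
proof
  let ?W = "mat_of_rows d (map w [0..<d])"
  assume "det ?W = 0"
  hence "det (transpose_mat ?W) = 0" by (simp add: det_transpose[OF mat_of_rows_map_carrier])
  then obtain c where c: "c \<in> carrier_vec d" "c \<noteq> 0\<^sub>v d" "transpose_mat ?W *\<^sub>v c = 0\<^sub>v d"
    using det_0_iff_vec_prod_zero[of "transpose_mat ?W" d] by auto
  have wc: "w i \<in> carrier_vec d" "w i \<noteq> 0\<^sub>v d" if "i < d" for i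
    using w[OF that] A by (auto simp: eigenvector_def)
  have annihilates: "(w i \<bullet> x) * c $ i = 0" if x: "x \<in> carrier_vec d" and i: "i < d" for x i
  proof -
    let ?D = "mat_diag d (\<lambda>i. w i \<bullet> x)" and ?V = "vandermonde_mat d lam" and ?K = "krylov_mat A x"
    have "transpose_mat ?V *\<^sub>v (?D *\<^sub>v c) = transpose_mat (?D * ?V) *\<^sub>v c"
      using c(1) by (simp add: transpose_mult[of _ d d _ d] assoc_mult_mat_vec[of _ d d _ d])
    also have "\<dots> = transpose_mat ?K *\<^sub>v (transpose_mat ?W *\<^sub>v c)"
      using c(1) x by (simp flip: eigenrows_mult_krylov_mat[OF A w x]
        add: transpose_mult[of _ d d _ d] assoc_mult_mat_vec[of _ d d _ d])
    also have "\<dots> = 0\<^sub>v d" using c(3) x by (intro eq_vecI) auto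
    finally have "transpose_mat ?V *\<^sub>v (?D *\<^sub>v c) = 0\<^sub>v d" .
    moreover have "det (transpose_mat ?V) \<noteq> 0"
      using det_vandermonde_mat_nonzero[OF inj] by (simp add: det_transpose[OF vandermonde_mat_carrier])
    ultimately have "?D *\<^sub>v c = 0\<^sub>v d"
      using kernel_trivial_if_det_nonzero[of "transpose_mat ?V" d "?D *\<^sub>v c"] c(1)
      by (simp add: mat_diag_mult_vec)
    thus ?thesis using i c(1) by (simp add: mat_diag_mult_vec vec_eq_iff)
  qed
  obtain i where i: "i < d" "c $ i \<noteq> 0" using c(1,2) by (auto simp: vec_eq_iff)
  obtain m where m: "m < d" "w i $ m \<noteq> 0" using wc[OF i(1)] by (auto simp: vec_eq_iff)
  show False using annihilates[OF unit_vec_carrier i(1), of m] wc(1)[OF i(1)] i m by simp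
qed

lemma eigenvector_smult:
  assumes A: "A \<in> carrier_mat n n" and ev: "eigenvector A v k" and s: "s \<noteq> 0"
  shows "eigenvector A (s \<cdot>\<^sub>v (v :: 'a::field vec)) k"
proof -
  have v: "v \<in> carrier_vec n" "v \<noteq> 0\<^sub>v n" "A *\<^sub>v v = k \<cdot>\<^sub>v v"
    using ev A by (auto simp: eigenvector_def)
  have "A *\<^sub>v (s \<cdot>\<^sub>v v) = k \<cdot>\<^sub>v (s \<cdot>\<^sub>v v)"
    using mult_mat_vec[OF A v(1), of s] v(3) by (simp add: smult_smult_assoc mult.commute)
  moreover have "s \<cdot>\<^sub>v v \<noteq> 0\<^sub>v n"
    using v s by (auto simp: vec_eq_iff)
  ultimately show ?thesis using v A by (simp add: eigenvector_def)
qed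

lemma exists_eigenrows_det_vandermonde:
  fixes A :: "'a::field mat"
  assumes A: "A \<in> carrier_mat d d" and inj: "inj_on lam {..<d}"
    and ev: "\<And>i. i < d \<Longrightarrow> eigenvalue A (lam i)"
  obtains w where "\<And>i. i < d \<Longrightarrow> eigenvector (transpose_mat A) (w i) (lam i)"
    and "det (mat_of_rows d (map w [0..<d])) = det (vandermonde_mat d lam)"
proof -
  have "eigenvalue (transpose_mat A) (lam i)" if "i < d" for i
    using ev[OF that] A by (simp add: eigenvalue_root_char_poly[of _ d])
  then obtain w0 where w0: "\<And>i. i < d \<Longrightarrow> eigenvector (transpose_mat A) (w0 i) (lam i)"
    unfolding eigenvalue_def by metis
  show thesis
  proof (cases "d = 0")
    case True
    hence "mat_of_rows d (map w0 [0..<d]) = vandermonde_mat d lam"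
      by (intro eq_matI) (auto simp: vandermonde_mat_def)
    thus thesis using that w0 by metis
  next
    case False
    define s where "s = det (vandermonde_mat d lam) / det (mat_of_rows d (map w0 [0..<d]))"
    have "s \<noteq> 0"
      using det_vandermonde_mat_nonzero[OF inj] det_eigenrows_nonzero[OF A inj w0] by (simp add: s_def)
    define w where "w i = (if i = 0 then s \<cdot>\<^sub>v w0 i else w0 i)" for i
    have "eigenvector (transpose_mat A) (w i) (lam i)" if "i < d" for i
      using w0[OF that] eigenvector_smult[OF _ w0[OF that] \<open>s \<noteq> 0\<close>] A
      by (cases "i = 0") (simp_all add: w_def)
    moreover have "mat_of_rows d (map w [0..<d]) = multrow 0 s (mat_of_rows d (map w0 [0..<d]))"
      using False w0[of 0] A by (intro eq_matI) (auto simp: w_def mat_of_rows_def mat_multrow_def eigenvector_def)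
    hence "det (mat_of_rows d (map w [0..<d])) = det (vandermonde_mat d lam)"
      using False det_eigenrows_nonzero[OF A inj w0]
      by (simp add: det_multrow[OF _ mat_of_rows_map_carrier] s_def)
    ultimately show thesis by (rule that)
  qed
qed

lemma prod_eigenrow_coeffs_eq_det_krylov_mat:
  fixes A :: "'a::idom mat"
  assumes A: "A \<in> carrier_mat d d" and inj: "inj_on lam {..<d}"
    and w: "\<And>i. i < d \<Longrightarrow> eigenvector (transpose_mat A) (w i) (lam i)"
    and W: "det (mat_of_rows d (map w [0..<d])) = det (vandermonde_mat d lam)"
    and x: "x \<in> carrier_vec d"
  shows "(\<Prod>i<d. w i \<bullet> x) = det (krylov_mat A x)"
proof -
  have "det (mat_of_rows d (map w [0..<d]) * krylov_mat A x)
        = det (mat_diag d (\<lambda>i. w i \<bullet> x) * vandermonde_mat d lam)"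
    by (simp only: eigenrows_mult_krylov_mat[OF A w x])
  hence "det (vandermonde_mat d lam) * det (krylov_mat A x)
         = (\<Prod>i<d. w i \<bullet> x) * det (vandermonde_mat d lam)"
    by (simp add: det_mult[OF mat_of_rows_map_carrier krylov_mat_carrier[OF x]]
        det_mult[OF mat_diag_dim vandermonde_mat_carrier] det_mat_diag W)
  thus ?thesis using det_vandermonde_mat_nonzero[OF inj] by (simp add: mult.commute)
qed

lemma krylov_mat_kernel_imp_zero:
  fixes A :: "'a::idom mat"
  assumes A: "A \<in> carrier_mat d d"
    and w: "\<And>i. i < d \<Longrightarrow> eigenvector (transpose_mat A) (w i) (lam i)"
    and W: "det (mat_of_rows d (map w [0..<d])) \<noteq> 0"
    and x: "x \<in> carrier_vec d" and c: "c \<in> carrier_vec d" and Kc: "krylov_mat A x *\<^sub>v c = 0\<^sub>v d"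
    and nonroot: "\<And>i. i < d \<Longrightarrow> poly (poly_of_vec c) (lam i) \<noteq> 0"
  shows "x = 0\<^sub>v d"
proof -
  let ?W = "mat_of_rows d (map w [0..<d])"
  have wc: "w i \<in> carrier_vec d" if "i < d" for i using w[OF that] A by (simp add: eigenvector_def)
  have "mat_diag d (\<lambda>i. w i \<bullet> x) *\<^sub>v (vandermonde_mat d lam *\<^sub>v c)
        = (mat_diag d (\<lambda>i. w i \<bullet> x) * vandermonde_mat d lam) *\<^sub>v c"
    by (rule assoc_mult_mat_vec[symmetric, OF mat_diag_dim vandermonde_mat_carrier c])
  also have "\<dots> = (?W * krylov_mat A x) *\<^sub>v c" by (simp only: eigenrows_mult_krylov_mat[OF A w x])
  also have "\<dots> = ?W *\<^sub>v (krylov_mat A x *\<^sub>v c)"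
    by (rule assoc_mult_mat_vec[OF mat_of_rows_map_carrier krylov_mat_carrier[OF x] c])
  also have "\<dots> = 0\<^sub>v d" using Kc by (intro eq_vecI) auto
  finally have "vec d (\<lambda>i. (w i \<bullet> x) * (vandermonde_mat d lam *\<^sub>v c) $ i) = 0\<^sub>v d"
    by (simp only: mat_diag_mult_vec[OF mult_mat_vec_carrier[OF vandermonde_mat_carrier c]])
  hence prod0: "(w i \<bullet> x) * (vandermonde_mat d lam *\<^sub>v c) $ i = 0" if "i < d" for i
    using that by (auto simp: vec_eq_iff)
  have "w i \<bullet> x = 0" if "i < d" for i
    using prod0[OF that] nonroot[OF that] by (simp add: vandermonde_mat_mult_vec[OF c that])
  hence "?W *\<^sub>v x = 0\<^sub>v d" using wc by (intro eq_vecI) simp_all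
  thus ?thesis using kernel_trivial_if_det_nonzero[OF mat_of_rows_map_carrier W x] by simp
qed

lemma lin_comb_col: "V \<in> carrier_mat d d \<Longrightarrow> lin_comb d a (col V) = V *\<^sub>v vec d a"
  by (intro eq_vecI) (auto simp: lin_comb_def scalar_prod_def lessThan_atLeast0 mult.commute)

lemma is_basis_Cd_col:
  assumes V: "V \<in> carrier_mat d d" and W: "W \<in> carrier_mat d d"
    and VW: "V * W = 1\<^sub>m d" and WV: "W * V = 1\<^sub>m d"
  shows "is_basis_Cd d (col V)"
  unfolding is_basis_Cd_def
proof (intro conjI allI impI ballI)
  fix i assume "i < d" thus "col V i \<in> carrier_vec d" using V by simp
next
  fix a i assume "lin_comb d a (col V) = 0\<^sub>v d" and i: "i < d"
  hence "W *\<^sub>v (V *\<^sub>v vec d a) = 0\<^sub>v d" using W by (auto simp: lin_comb_col[OF V])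
  hence "vec d a = 0\<^sub>v d" using V W WV by (simp flip: assoc_mult_mat_vec[of _ d d _ d])
  thus "a i = 0" using i by (metis index_vec index_zero_vec(1))
next
  fix x :: "complex vec" assume x: "x \<in> carrier_vec d"
  have "x = V *\<^sub>v (W *\<^sub>v x)" using V W VW x by (simp flip: assoc_mult_mat_vec[of _ d d _ d])
  also have "W *\<^sub>v x = vec d (\<lambda>i. (W *\<^sub>v x) $ i)" using W by (intro eq_vecI) auto
  finally show "\<exists>a. x = lin_comb d a (col V)" by (auto simp: lin_comb_col[OF V])
qed

lemma lin_comb_col_coeff:
  assumes V: "V \<in> carrier_mat d d" and W: "W \<in> carrier_mat d d" and WV: "W * V = 1\<^sub>m d"
    and x: "x = lin_comb d a (col V)" and i: "i < d"
  shows "a i = row W i \<bullet> x"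
proof -
  have "W *\<^sub>v x = vec d a"
    using V W WV by (simp add: x lin_comb_col[OF V] flip: assoc_mult_mat_vec[of _ d d _ d])
  thus ?thesis using i W by (metis carrier_matD(1) index_mult_mat_vec index_vec)
qed

lemma eigenvector_col_if_eigenrows:
  assumes A: "A \<in> carrier_mat d d" and V: "V \<in> carrier_mat d d" and W: "W \<in> carrier_mat d d"
    and VW: "V * W = 1\<^sub>m d" and WV: "W * V = 1\<^sub>m d" and WA: "W * A = mat_diag d lam * W"
    and i: "i < d"
  shows "eigenvector A (col V i) (lam i)"
proof -
  have "A * V = (V * W) * (A * V)" using A V VW by simp
  also have "\<dots> = V * (W * A) * V" using A V W by (simp add: assoc_mult_mat[of _ d d _ d _ d])
  also have "\<dots> = V * mat_diag d lam * W * V"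
    unfolding WA using assoc_mult_mat[OF V mat_diag_dim W] by simp
  also have "\<dots> = V * mat_diag d lam * (W * V)"
    by (rule assoc_mult_mat[OF mult_carrier_mat[OF V mat_diag_dim] W V])
  also have "\<dots> = V * mat_diag d lam"
    unfolding WV by (rule right_mult_one_mat[OF mult_carrier_mat[OF V mat_diag_dim]])
  finally have "A *\<^sub>v col V i = lam i \<cdot>\<^sub>v col V i"
    using A V i by (simp flip: col_mult2 add: mat_diag_mult_right[of _ d] vec_eq_iff mult.commute)
  moreover have "col V i \<noteq> 0\<^sub>v d"
  proof
    assume "col V i = 0\<^sub>v d"
    hence "col (W * V) i = 0\<^sub>v d" using W V i by simp (intro eq_vecI; simp)
    thus False using WV i by (auto simp: vec_eq_iff)
  qed
  ultimately show ?thesis using A V i by (simp add: eigenvector_def)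
qed

lemma map_mat_of_rat_of_int: "map_mat of_rat (map_mat of_int A) = map_mat of_int A"
  by (intro eq_matI) auto

lemma distinct_eigenvalues_if_irreducible_char_poly:
  fixes A :: "rat mat"
  assumes A: "A \<in> carrier_mat d d" and irr: "irreducible (char_poly A)"
  obtains lam :: "nat \<Rightarrow> complex"
  where "inj_on lam {..<d}" and "\<And>i. i < d \<Longrightarrow> eigenvalue (map_mat of_rat A) (lam i)"
proof -
  let ?B = "map_mat (of_rat :: rat \<Rightarrow> complex) A"
  have B: "?B \<in> carrier_mat d d" using A by simp
  obtain as where as: "char_poly ?B = (\<Prod>a\<leftarrow>as. [:-a, 1:])" "length as = d"
    using char_poly_factorized[OF B] by blast
  have "rsquarefree (char_poly ?B)"
    using rsquarefree_of_irreducible[OF irr] by (simp add: of_rat_hom.char_poly_hom[OF A])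
  hence "distinct as" using as(1) distinct_if_rsquarefree_linear_factors by metis
  hence "inj_on (\<lambda>i. as ! i) {..<d}" using as(2) by (auto simp: inj_on_def nth_eq_iff_index_eq)
  moreover have "eigenvalue ?B (as ! i)" if "i < d" for i
    unfolding eigenvalue_root_char_poly[OF B] as(1) using that as(2) by (intro linear_poly_root) simp
  ultimately show thesis by (rule that)
qed

(* The complex left eigenvectors w only serve the proof (in place of Cayley-Hamilton): they turn
   a rational kernel vector of the Krylov matrix into the vanishing of x. *)
lemma det_krylov_mat_nonzero_if_irreducible:
  fixes A :: "rat mat" and w :: "nat \<Rightarrow> complex vec"
  assumes A: "A \<in> carrier_mat d d" and irr: "irreducible (char_poly A)"
    and w: "\<And>i. i < d \<Longrightarrow> eigenvector (transpose_mat (map_mat of_rat A)) (w i) (lam i)"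
    and W: "det (mat_of_rows d (map w [0..<d])) \<noteq> 0"
    and x: "x \<in> carrier_vec d" "x \<noteq> 0\<^sub>v d"
  shows "det (krylov_mat A x) \<noteq> 0"
proof
  let ?B = "map_mat (of_rat :: rat \<Rightarrow> complex) A"
  have B: "?B \<in> carrier_mat d d" using A by simp
  assume "det (krylov_mat A x) = 0"
  then obtain c where c: "c \<in> carrier_vec d" "c \<noteq> 0\<^sub>v d" "krylov_mat A x *\<^sub>v c = 0\<^sub>v d"
    using det_0_iff_vec_prod_zero[OF krylov_mat_carrier[OF x(1)]] by blast
  have "krylov_mat ?B (map_vec of_rat x) *\<^sub>v map_vec of_rat c = map_vec of_rat (krylov_mat A x *\<^sub>v c)"
    using A x(1) c(1) by (simp add: of_rat_hom.krylov_mat_hom of_rat_hom.mult_mat_vec_hom[of _ d d])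
  hence kernel: "krylov_mat ?B (map_vec of_rat x) *\<^sub>v map_vec of_rat c = 0\<^sub>v d"
    using c(3) by simp
  have deg: "degree (poly_of_vec c) < degree (char_poly A)"
    using degree_poly_of_vec_le[of c] degree_monic_char_poly[OF A] c(1,2) by (cases d) auto
  have nz: "poly_of_vec c \<noteq> 0" using c(1,2) by (simp add: poly_of_vec_eq_0_iff)
  have root: "poly (map_poly of_rat (char_poly A)) (lam i) = 0" if "i < d" for i
  proof -
    have "eigenvalue (transpose_mat ?B) (lam i)" using w[OF that] by (auto simp: eigenvalue_def)
    thus ?thesis using B by (simp add: eigenvalue_root_char_poly[of _ d] of_rat_hom.char_poly_hom[OF A, symmetric])
  qed
  have "poly (poly_of_vec (map_vec of_rat c)) (lam i) \<noteq> 0" if "i < d" for i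
    using irreducible_nonzero_at_root[OF irr nz deg root[OF that]] by (simp flip: map_poly_poly_of_vec)
  hence "map_vec of_rat x = 0\<^sub>v d"
    using krylov_mat_kernel_imp_zero[OF B w W _ _ kernel] x(1) c(1) by simp
  thus False using x by (simp add: vec_eq_iff)
qed

lemma norm_prod_eigenrow_coeffs_ge_1:
  fixes A :: "int mat"
  assumes A: "A \<in> carrier_mat d d" and irr: "irreducible (char_poly (map_mat rat_of_int A))"
    and inj: "inj_on lam {..<d}"
    and w: "\<And>i. i < d \<Longrightarrow> eigenvector (transpose_mat (map_mat complex_of_int A)) (w i) (lam i)"
    and W: "det (mat_of_rows d (map w [0..<d])) = det (vandermonde_mat d lam)"
    and k: "k \<in> carrier_vec d" "k \<noteq> 0\<^sub>v d"
  shows "(\<Prod>i<d. cmod (w i \<bullet> map_vec of_int k)) \<ge> 1"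
proof -
  have "(\<Prod>i<d. w i \<bullet> map_vec of_int k) = of_int (det (krylov_mat A k))"
    using prod_eigenrow_coeffs_eq_det_krylov_mat[OF _ inj w W] A k(1)
    by (simp add: of_int_hom.krylov_mat_hom[OF A k(1)] of_int_hom.hom_det)
  hence "(\<Prod>i<d. cmod (w i \<bullet> map_vec of_int k)) = \<bar>real_of_int (det (krylov_mat A k))\<bar>"
    by (simp add: prod_norm)
  moreover have "det (krylov_mat (map_mat rat_of_int A) (map_vec of_int k)) \<noteq> 0"
    using det_krylov_mat_nonzero_if_irreducible[OF _ irr, where w = w and lam = lam and x = "map_vec of_int k"]
      W det_vandermonde_mat_nonzero[OF inj] w A k
    by (auto simp: map_mat_of_rat_of_int vec_eq_iff)
  hence "det (krylov_mat A k) \<noteq> 0"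
    by (simp add: of_int_hom.krylov_mat_hom[OF A k(1)] of_int_hom.hom_det)
  ultimately show ?thesis by linarith
qed

theorem lemma4p4:
  fixes A :: "int mat" and d :: nat
  assumes "A \<in> carrier_mat d d"
    and "det A = 1"
    and "\<forall>z. eigenvalue (map_mat complex_of_int A) z \<longrightarrow> \<not> (\<exists>n>0. z ^ n = 1)"
    and "irreducible (char_poly (map_mat rat_of_int A))"
  shows "\<exists>v. is_basis_Cd d v \<and>
           (\<forall>i<d. \<exists>\<mu>. eigenvector (map_mat complex_of_int A) (v i) \<mu>) \<and>
           (\<forall>k \<in> carrier_vec d. k \<noteq> 0\<^sub>v d \<longrightarrow>
              (\<forall>a. map_vec complex_of_int k = lin_comb d a v \<longrightarrow>
                   (\<Prod>i<d. cmod (a i)) \<ge> 1))"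
proof -
  let ?B = "map_mat complex_of_int A"
  have B: "?B \<in> carrier_mat d d" using assms(1) by simp
  obtain lam where inj: "inj_on lam {..<d}" and ev: "\<And>i. i < d \<Longrightarrow> eigenvalue ?B (lam i)"
    using distinct_eigenvalues_if_irreducible_char_poly[of "map_mat rat_of_int A" d] assms(1,4)
    by (auto simp: map_mat_of_rat_of_int)
  obtain w where w: "\<And>i. i < d \<Longrightarrow> eigenvector (transpose_mat ?B) (w i) (lam i)"
    and W_vandermonde: "det (mat_of_rows d (map w [0..<d])) = det (vandermonde_mat d lam)"
    using exists_eigenrows_det_vandermonde[OF B inj ev] by blast
  define W where "W = mat_of_rows d (map w [0..<d])"
  have W: "W \<in> carrier_mat d d" and "det W \<noteq> 0"
    using W_vandermonde det_vandermonde_mat_nonzero[OF inj] by (simp_all add: W_def)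
  then obtain V where V: "V \<in> carrier_mat d d" and VW: "V * W = 1\<^sub>m d" and WV: "W * V = 1\<^sub>m d"
    using det_non_zero_imp_unit[OF W] by (auto simp: Units_def ring_mat_simps)
  have "is_basis_Cd d (col V)" by (rule is_basis_Cd_col[OF V W VW WV])
  moreover have "eigenvector ?B (col V i) (lam i)" if "i < d" for i
    using eigenvector_col_if_eigenrows[OF B V W VW WV _ that] eigenrows_mult[OF B w] by (simp add: W_def)
  moreover have "(\<Prod>i<d. cmod (a i)) \<ge> 1"
    if k: "k \<in> carrier_vec d" "k \<noteq> 0\<^sub>v d" and a: "map_vec complex_of_int k = lin_comb d a (col V)" for k a
  proof -
    have "a i = w i \<bullet> map_vec of_int k" if "i < d" for i
      using lin_comb_col_coeff[OF V W WV a that] w[OF that] B that by (auto simp: W_def eigenvector_def)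
    thus ?thesis
      using norm_prod_eigenrow_coeffs_ge_1[OF assms(1,4) inj w W_vandermonde k] by simp
  qed
  ultimately show ?thesis by blast
qed

end
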